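(* In the social learning model, suppose the left tail of $G_-$ is convex and differentiable. Then there exists a positive integer $z$ such that for all $t\ge1$ and $s\ge1$: if $a_t=a_{t+1}=\cdots=a_{t+s-1}=+1$, then $\ell_{t+s}\ge \ell^*_{s-z}$.
   Context: Social learning model. A state $\theta\in\{-1,+1\}$ is drawn with $\mathbb{P}(\theta=+1)=\mathbb{P}(\theta=-1)=1/2$. Agents $t=1,2,\dots$ receive private signals $s_t\in\mathbb{R}$ that are i.i.d. conditionally on $\theta$, with CDF $F_+$ if $\theta=+1$ and $F_-$ if $\theta=-1$; $F_+$ and $F_-$ are mutually absolutely continuous. Let $L_t=\log\frac{\mathbb{P}(\theta=+1\mid s_t)}{\mathbb{P}(\theta=-1\mid s_t)}$ be the private log-likelihood ratio, and let $G_+$, $G_-$ denote the CDFs of $L_t$ conditional on $\theta=+1$, $\theta=-1$ respectively. Signals are assumed unbounded: for every $M\in\mathbb{R}$, $\mathbb{P}(L_t>M)>0$ and $\mathbb{P}(L_t<-M)>0$. Agent $t$ observes $a_1,\dots,a_{t-1}$ and her own signal and chooses $a_t\in\{-1,+1\}$ (utility $1$ if $a_t=\theta$, else $0$). The public belief is $\mu_t=\mathbb{P}(\theta=+1\mid a_1,\dots,a_{t-1})$ and $\ell_t=\log\frac{\mu_t}{1-\mu_t}$ (so $\ell_1=0$). In equilibrium $a_t=+1$ iff $\ell_t+L_t>0$, and otherwise $a_t=-1$. Consequently $\ell_{t+1}=\ell_t+D_+(\ell_t)$ if $a_t=+1$ and $\ell_{t+1}=\ell_t+D_-(\ell_t)$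 if $a_t=-1$, where $D_+(x)=\log\frac{1-G_+(-x)}{1-G_-(-x)}$ and $D_-(x)=\log\frac{G_+(-x)}{G_-(-x)}$. We write $\mathbb{P}_+(\cdot)=\mathbb{P}(\cdot\mid\theta=+1)$ and $\mathbb{E}_+$ for the corresponding expectation. "The left tail of $G_-$ is convex and differentiable" means: there exists $x_0\in\mathbb{R}$ such that the restriction of $G_-$ to $(-\infty,x_0)$ is convex and differentiable. $\ell^*_t$ denotes the value of $\ell_t$ on the event $a_1=\cdots=a_{t-1}=+1$, i.e., $\ell^*_1=0$ and $\ell^*_{t+1}=\ell^*_t+D_+(\ell^*_t)$; by convention $\ell^*_j=0$ for integers $j\le 1$. *)

theory Defs
  imports "HOL-Probability.Probability"
begin

text \<open>Social learning model. Fp, Fm are the signal distributions (on the real line)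
  conditional on theta = +1 and theta = -1 respectively.\<close>

definition priv_llr :: "real measure \<Rightarrow> real measure \<Rightarrow> real \<Rightarrow> real" where
  "priv_llr Fp Fm s = ln (enn2real (RN_deriv Fm Fp s))"

definition Gp :: "real measure \<Rightarrow> real measure \<Rightarrow> real \<Rightarrow> real" where
  "Gp Fp Fm x = measure Fp {s. priv_llr Fp Fm s \<le> x}"

definition Gm :: "real measure \<Rightarrow> real measure \<Rightarrow> real \<Rightarrow> real" where
  "Gm Fp Fm x = measure Fm {s. priv_llr Fp Fm s \<le> x}"

definition Dp :: "real measure \<Rightarrow> real measure \<Rightarrow> real \<Rightarrow> real" where
  "Dp Fp Fm x = ln ((1 - Gp Fp Fm (- x)) / (1 - Gm Fp Fm (- x)))"

definition Dm :: "real measure \<Rightarrow> real measure \<Rightarrow> real \<Rightarrow> real" where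
  "Dm Fp Fm x = ln (Gp Fp Fm (- x) / Gm Fp Fm (- x))"

text \<open>Public log-likelihood ratio ell_t along an action sequence a
  (a i = True means a_i = +1, False means a_i = -1); agents are indexed from 1,
  ell_1 = 0; the value at index 0 is an unused convention.\<close>
fun pub_llr :: "real measure \<Rightarrow> real measure \<Rightarrow> (nat \<Rightarrow> bool) \<Rightarrow> nat \<Rightarrow> real" where
  "pub_llr Fp Fm a 0 = 0"
| "pub_llr Fp Fm a (Suc 0) = 0"
| "pub_llr Fp Fm a (Suc (Suc n)) =
     (let l = pub_llr Fp Fm a (Suc n) in
      l + (if a (Suc n) then Dp Fp Fm l else Dm Fp Fm l))"

text \<open>ell*_j: public LLR after j-1 consecutive +1 actions; 0 for j \<le> 1.\<close>
definition lstar :: "real measure \<Rightarrow> real measure \<Rightarrow> int \<Rightarrow> real" where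
  "lstar Fp Fm j = (if j \<le> 1 then 0 else pub_llr Fp Fm (\<lambda>_. True) (nat j))"

definition social_learning_model :: "real measure \<Rightarrow> real measure \<Rightarrow> bool" where
  "social_learning_model Fp Fm \<longleftrightarrow>
     prob_space Fp \<and> prob_space Fm \<and>
     sets Fp = sets borel \<and> sets Fm = sets borel \<and>
     absolutely_continuous Fp Fm \<and> absolutely_continuous Fm Fp \<and>
     (\<forall>M. measure Fp {s. priv_llr Fp Fm s > M} + measure Fm {s. priv_llr Fp Fm s > M} > 0 \<and>
          measure Fp {s. priv_llr Fp Fm s < - M} + measure Fm {s. priv_llr Fp Fm s < - M} > 0)"

definition left_tail_convex_diff :: "(real \<Rightarrow> real) \<Rightarrow> bool" where
  "left_tail_convex_diff G \<longleftrightarrow>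
     (\<exists>x0. convex_on {..<x0} G \<and> (\<forall>x<x0. G differentiable (at x)))"

end

theory Submission
  imports Defs
begin

text \<open>Along a run of \<open>+1\<close> actions the public LLR evolves by \<open>f x = x + D\<^sub>+(x)\<close>. This map
  satisfies \<open>f x \<ge> max 0 x\<close>; unbounded signals give it a uniform gain on every interval \<open>[0, m]\<close>;
  and convexity of the left tail of \<open>G\<^sub>-\<close> makes it monotone on a half-line \<open>[X, \<infinity>)\<close>. The uniform gain lets a bounded number \<open>P\<close> of steps lift any
  nonnegative value above \<open>\<ell>*\<^sub>K\<close>, where \<open>K\<close> is chosen with \<open>\<ell>*\<^sub>K \<ge> X\<close>; from then on
  monotonicity keeps every orbit ahead of the orbit of 0 shifted by \<open>P + 1\<close> steps.\<close>

lemma convex_on_increment_le: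
  fixes G :: "real \<Rightarrow> real"
  assumes G: "convex_on I G" and I: "c \<in> I" "e \<in> I" and cde: "c \<le> d" "d < e"
  shows "G d - G c \<le> (d - c) * ((G e - G d) / (e - d))"
proof (cases "c = d")
  case False
  with cde have "c < d" by simp
  have "(G c - G d) / (c - d) \<le> (G c - G e) / (c - e)"
       "(G c - G e) / (c - e) \<le> (G d - G e) / (d - e)"
    using convex_on_slope_le[OF G I \<open>c < d\<close> \<open>d < e\<close>] by auto
  hence "(G d - G c) / (d - c) \<le> (G e - G d) / (e - d)"
    by (metis (no_types) minus_diff_eq minus_divide_divide order_trans)
  thus ?thesis using \<open>c < d\<close> \<open>d < e\<close> by (simp add: field_simps)
qed simp

lemma funpow_inflationary_mono:
  fixes f :: "'a::preorder \<Rightarrow> 'a"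
  assumes "\<And>x. x \<le> f x" and "m \<le> n"
  shows "(f ^^ m) y \<le> (f ^^ n) y"
  using \<open>m \<le> n\<close>
proof (induction n rule: dec_induct)
  case (step n)
  thus ?case using assms(1)[of "(f ^^ n) y"] order_trans by fastforce
qed simp

lemma funpow_ge_min_linear:
  fixes f :: "real \<Rightarrow> real"
  assumes infl: "\<And>x. x \<le> f x"
    and gain: "\<And>x. 0 \<le> x \<Longrightarrow> x \<le> T \<Longrightarrow> x + d \<le> f x" and "0 \<le> y"
  shows "min T (real n * d) \<le> (f ^^ n) y"
proof (induction n)
  case (Suc n)
  let ?v = "(f ^^ n) y"
  have "0 \<le> ?v" using funpow_inflationary_mono[OF infl, of 0 n y] \<open>0 \<le> y\<close> by simp
  show ?case
  proof (cases "T \<le> ?v")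
    case True
    thus ?thesis using infl[of ?v] by simp
  next
    case False
    with Suc.IH have "real n * d \<le> ?v" by linarith
    thus ?thesis using gain[OF \<open>0 \<le> ?v\<close>] False by (simp add: algebra_simps)
  qed
qed (use \<open>0 \<le> y\<close> in simp)

lemma funpow_escapes:
  fixes f :: "real \<Rightarrow> real"
  assumes infl: "\<And>x. x \<le> f x"
    and gain: "\<And>m. 0 < m \<Longrightarrow> \<exists>d>0. \<forall>x. 0 \<le> x \<and> x \<le> m \<longrightarrow> x + d \<le> f x"
  shows "\<exists>n. \<forall>y\<ge>0. T \<le> (f ^^ n) y"
proof -
  define T' where "T' = max T 1"
  obtain d where "d > 0" and d: "\<And>x. 0 \<le> x \<Longrightarrow> x \<le> T' \<Longrightarrow> x + d \<le> f x"
    using gain[of T'] unfolding T'_def by fastforce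
  define n where "n = nat \<lceil>T' / d\<rceil>"
  have "T' \<le> real n * d"
    unfolding n_def using \<open>d > 0\<close> real_nat_ceiling_ge[of "T' / d"] by (simp add: pos_divide_le_eq)
  hence "T \<le> (f ^^ n) y" if "0 \<le> y" for y
    using funpow_ge_min_linear[of f T' d y n, OF infl d that] unfolding T'_def by linarith
  thus ?thesis by blast
qed

lemma funpow_overtakes_orbit_of_zero:
  fixes f :: "real \<Rightarrow> real"
  assumes nonneg: "\<And>x. 0 \<le> f x" and infl: "\<And>x. x \<le> f x"
    and gain: "\<And>m. 0 < m \<Longrightarrow> \<exists>d>0. \<forall>x. 0 \<le> x \<and> x \<le> m \<longrightarrow> x + d \<le> f x"
    and mono: "\<And>x y. X \<le> x \<Longrightarrow> x \<le> y \<Longrightarrow> f x \<le> f y"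
  shows "\<exists>z>0. \<forall>y j. (f ^^ j) 0 \<le> (f ^^ (z + j)) y"
proof -
  obtain K where "X \<le> (f ^^ K) 0"
    using funpow_escapes[OF infl gain, of X] by auto
  obtain P where P: "\<And>y. 0 \<le> y \<Longrightarrow> (f ^^ K) 0 \<le> (f ^^ P) y"
    using funpow_escapes[OF infl gain, of "(f ^^ K) 0"] by auto
  have catch_up: "(f ^^ (K + j)) 0 \<le> (f ^^ (Suc P + j)) y" for y j
  proof (induction j)
    case 0
    show ?case using P[OF nonneg[of y]] by (simp add: funpow_Suc_right del: funpow.simps)
  next
    case (Suc j)
    have "X \<le> (f ^^ (K + j)) 0"
      using \<open>X \<le> (f ^^ K) 0\<close> funpow_inflationary_mono[OF infl, of K "K + j" 0] by simp
    with Suc.IH show ?case using mono by simp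
  qed
  have "(f ^^ j) 0 \<le> (f ^^ (Suc P + j)) y" for y j
    using funpow_inflationary_mono[OF infl, of j "K + j" 0] catch_up[of j y] by simp
  thus ?thesis by blast
qed

lemma funpow_delayed_orbit_of_zero_le:
  fixes f :: "real \<Rightarrow> real"
  assumes nonneg: "\<And>x. 0 \<le> f x" and infl: "\<And>x. x \<le> f x"
    and lag: "\<And>j. (f ^^ j) 0 \<le> (f ^^ (z + j)) y" and "1 \<le> s"
  shows "(f ^^ (nat (int s - int z) - 1)) 0 \<le> (f ^^ s) y"
proof (cases "z < s")
  case True
  have "(f ^^ (s - z - 1)) 0 \<le> (f ^^ (z + (s - z - 1))) y" by (rule lag)
  also have "\<dots> \<le> (f ^^ s) y" using funpow_inflationary_mono[OF infl, of "z + (s - z - 1)" s] True by simp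
  finally show ?thesis using True by (simp add: nat_diff_distrib)
next
  case False
  then obtain r where "s = Suc r" using \<open>1 \<le> s\<close> by (cases s) auto
  thus ?thesis using False nonneg[of "(f ^^ r) y"] by simp
qed

definition up_update :: "real measure \<Rightarrow> real measure \<Rightarrow> real \<Rightarrow> real" where
  "up_update Fp Fm x = x + Dp Fp Fm x"

lemma pub_llr_up_run:
  assumes "1 \<le> t" and "\<forall>i. t \<le> i \<and> i < t + k \<longrightarrow> a i"
  shows "pub_llr Fp Fm a (t + k) = (up_update Fp Fm ^^ k) (pub_llr Fp Fm a t)"
  using assms(2)
proof (induction k)
  case (Suc k)
  obtain n where n: "t + k = Suc n" using \<open>1 \<le> t\<close> by (cases "t + k") auto
  with Suc.prems have "a (Suc n)" by auto
  with n Suc show ?case by (simp add: Let_def up_update_def)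
qed simp

lemma lstar_eq_funpow_up_update: "lstar Fp Fm j = (up_update Fp Fm ^^ (nat j - 1)) 0"
proof (cases "j \<le> 1")
  case False
  have "pub_llr Fp Fm (\<lambda>_. True) (Suc n) = (up_update Fp Fm ^^ n) 0" for n
    by (induction n) (simp_all add: Let_def up_update_def)
  moreover have "lstar Fp Fm j = pub_llr Fp Fm (\<lambda>_. True) (Suc (nat j - 1))"
    using False by (simp add: lstar_def)
  ultimately show ?thesis by simp
qed (simp add: lstar_def)

locale social_learning =
  Fp: prob_space Fp + Fm: prob_space Fm for Fp Fm :: "real measure" +
  assumes sets_Fp: "sets Fp = sets borel" and sets_Fm: "sets Fm = sets borel"
    and ac_Fp_Fm: "absolutely_continuous Fp Fm" and ac_Fm_Fp: "absolutely_continuous Fm Fp"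
    and unbounded: "\<forall>M. measure Fp {s. priv_llr Fp Fm s > M} + measure Fm {s. priv_llr Fp Fm s > M} > 0 \<and>
          measure Fp {s. priv_llr Fp Fm s < - M} + measure Fm {s. priv_llr Fp Fm s < - M} > 0"

lemma social_learning_modelD: "social_learning_model Fp Fm \<Longrightarrow> social_learning Fp Fm"
  unfolding social_learning_model_def social_learning_def social_learning_axioms_def by blast

context social_learning
begin

abbreviation L :: "real \<Rightarrow> real" where "L \<equiv> priv_llr Fp Fm"

lemma space_Fp: "space Fp = UNIV" and space_Fm: "space Fm = UNIV"
  using sets_eq_imp_space_eq[OF sets_Fp] sets_eq_imp_space_eq[OF sets_Fm] by simp_all

lemma borel_measurable_RN_deriv_Fm_Fp: "RN_deriv Fm Fp \<in> borel_measurable borel"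
  using borel_measurable_RN_deriv[of Fm Fp] measurable_cong_sets[OF sets_Fm refl] by blast

lemma borel_measurable_priv_llr [measurable]: "L \<in> borel_measurable borel"
  unfolding priv_llr_def using borel_measurable_RN_deriv_Fm_Fp by measurable

lemma density_RN_deriv_Fm_Fp: "density Fm (RN_deriv Fm Fp) = Fp"
  using Fm.density_RN_deriv ac_Fm_Fp sets_Fp sets_Fm by simp

lemma emeasure_Fp_RN_deriv:
  assumes "S \<in> sets borel"
  shows "emeasure Fp S = (\<integral>\<^sup>+ x. RN_deriv Fm Fp x * indicator S x \<partial>Fm)"
  using emeasure_density[of "RN_deriv Fm Fp" Fm S] density_RN_deriv_Fm_Fp assms sets_Fm
  by (metis borel_measurable_RN_deriv)

text \<open>The density vanishes only on an \<open>Fp\<close>-null set, which is \<open>Fm\<close>-null since \<open>Fm \<ll> Fp\<close>.\<close>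
lemma AE_RN_deriv_eq_exp_priv_llr: "AE s in Fm. RN_deriv Fm Fp s = ennreal (exp (L s))"
proof -
  have finite: "AE s in Fm. RN_deriv Fm Fp s \<noteq> \<infinity>"
    using Fm.RN_deriv_finite[of Fp] ac_Fm_Fp sets_Fp sets_Fm Fp.sigma_finite_measure_axioms
    by simp
  define Z where "Z = {s. RN_deriv Fm Fp s = 0}"
  have Z: "Z \<in> sets borel" unfolding Z_def using borel_measurable_RN_deriv_Fm_Fp by measurable
  have "emeasure Fp Z = (\<integral>\<^sup>+ x. RN_deriv Fm Fp x * indicator Z x \<partial>Fm)"
    by (rule emeasure_Fp_RN_deriv[OF Z])
  also have "\<dots> = 0"
    by (rule nn_integral_zero') (auto simp: Z_def indicator_def)
  finally have "Z \<in> null_sets Fm"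
    using Z sets_Fp ac_Fp_Fm by (auto simp: null_sets_def absolutely_continuous_def)
  hence "AE s in Fm. s \<notin> Z" by (rule AE_not_in)
  with finite show ?thesis
  proof eventually_elim
    case (elim s)
    then obtain r where "RN_deriv Fm Fp s = ennreal r" "0 < r"
      by (cases "RN_deriv Fm Fp s") (auto simp: Z_def)
    thus ?case by (simp add: priv_llr_def)
  qed
qed

lemma emeasure_Fp_eq_exp_priv_llr:
  assumes "S \<in> sets borel"
  shows "emeasure Fp S = (\<integral>\<^sup>+ s. ennreal (exp (L s)) * indicator S s \<partial>Fm)"
  unfolding emeasure_Fp_RN_deriv[OF assms]
  by (rule nn_integral_cong_AE) (use AE_RN_deriv_eq_exp_priv_llr in eventually_elim, auto)

lemma exp_mult_measure_Fm_le_Fp: "exp u * measure Fm {s. u < L s} \<le> measure Fp {s. u < L s}"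
proof -
  let ?S = "{s. u < L s}"
  have "ennreal (exp u) * emeasure Fm ?S = (\<integral>\<^sup>+ s. ennreal (exp u) * indicator ?S s \<partial>Fm)"
    using sets_Fm by (simp add: nn_integral_cmult_indicator)
  also have "\<dots> \<le> (\<integral>\<^sup>+ s. ennreal (exp (L s)) * indicator ?S s \<partial>Fm)"
    by (rule nn_integral_mono) (auto simp: indicator_def)
  also have "\<dots> = emeasure Fp ?S" by (simp add: emeasure_Fp_eq_exp_priv_llr)
  finally show ?thesis
    by (simp add: Fm.emeasure_eq_measure Fp.emeasure_eq_measure ennreal_mult[symmetric])
qed

lemma Gp_le_exp_mult_Gm: "Gp Fp Fm u \<le> exp u * Gm Fp Fm u"
proof -
  let ?S = "{s. L s \<le> u}"
  have "emeasure Fp ?S = (\<integral>\<^sup>+ s. ennreal (exp (L s)) * indicator ?S s \<partial>Fm)"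
    by (simp add: emeasure_Fp_eq_exp_priv_llr)
  also have "\<dots> \<le> (\<integral>\<^sup>+ s. ennreal (exp u) * indicator ?S s \<partial>Fm)"
    by (rule nn_integral_mono) (auto simp: indicator_def)
  also have "\<dots> = ennreal (exp u) * emeasure Fm ?S"
    using sets_Fm by (simp add: nn_integral_cmult_indicator)
  finally show ?thesis unfolding Gp_def Gm_def
    by (simp add: Fm.emeasure_eq_measure Fp.emeasure_eq_measure ennreal_mult[symmetric])
qed

text \<open>On \<open>{L < -m}\<close> the likelihood ratio \<open>exp L\<close> is at most \<open>exp (-m)\<close>, so that set contributes a
  fixed fraction \<open>1 - exp (-m)\<close> of its \<open>Fm\<close>-mass to the gap \<open>Gm u - Gp u\<close>.\<close>
lemma Gp_add_gap_le_Gm: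
  assumes "0 < m" "- m \<le> u" "u \<le> 0"
  shows "Gp Fp Fm u + (1 - exp (- m)) * measure Fm {s. L s < - m} \<le> Gm Fp Fm u"
proof -
  let ?S = "{s. L s \<le> u}" and ?T = "{s. L s < - m}" and ?c = "1 - exp (- m)"
  have "0 \<le> ?c" using assms by simp
  have "emeasure Fp ?S + ennreal ?c * emeasure Fm ?T
     = (\<integral>\<^sup>+ s. ennreal (exp (L s)) * indicator ?S s \<partial>Fm) + (\<integral>\<^sup>+ s. ennreal ?c * indicator ?T s \<partial>Fm)"
    using sets_Fm by (simp add: emeasure_Fp_eq_exp_priv_llr nn_integral_cmult_indicator)
  also have "\<dots> = (\<integral>\<^sup>+ s. ennreal (exp (L s)) * indicator ?S s + ennreal ?c * indicator ?T s \<partial>Fm)"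
    by (rule nn_integral_add[symmetric]) (use sets_Fm in auto)
  also have "\<dots> \<le> (\<integral>\<^sup>+ s. indicator ?S s \<partial>Fm)"
  proof (rule nn_integral_mono)
    fix s
    show "ennreal (exp (L s)) * indicator ?S s + ennreal ?c * indicator ?T s \<le> indicator ?S s"
    proof (cases "L s < - m")
      case True
      hence "ennreal (exp (L s)) + ennreal ?c \<le> ennreal 1"
        using \<open>0 \<le> ?c\<close> by (simp add: ennreal_plus[symmetric] del: ennreal_plus)
      thus ?thesis using True assms by (simp add: indicator_def)
    next
      case False
      have "exp (L s) \<le> 1" if "L s \<le> u" using that assms by simp
      thus ?thesis using False by (simp add: indicator_def)
    qed
  qed
  also have "\<dots> = emeasure Fm ?S" using sets_Fm by simp
  finally show ?thesis using \<open>0 \<le> ?c\<close> unfolding Gp_def Gm_def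
    by (simp add: Fm.emeasure_eq_measure Fp.emeasure_eq_measure ennreal_mult[symmetric]
        ennreal_plus[symmetric] del: ennreal_plus)
qed

lemma measure_Fp_priv_llr_greater: "measure Fp {s. u < L s} = 1 - Gp Fp Fm u"
proof -
  have "{s. u < L s} = space Fp - {s. L s \<le> u}" using space_Fp by auto
  thus ?thesis using Fp.prob_compl[of "{s. L s \<le> u}"] sets_Fp by (simp add: Gp_def)
qed

lemma measure_Fm_priv_llr_greater: "measure Fm {s. u < L s} = 1 - Gm Fp Fm u"
proof -
  have "{s. u < L s} = space Fm - {s. L s \<le> u}" using space_Fm by auto
  thus ?thesis using Fm.prob_compl[of "{s. L s \<le> u}"] sets_Fm by (simp add: Gm_def)
qed

lemma Gp_mono: "u \<le> v \<Longrightarrow> Gp Fp Fm u \<le> Gp Fp Fm v"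
  unfolding Gp_def using sets_Fp by (intro Fp.finite_measure_mono) auto

lemma Gm_le_1: "Gm Fp Fm u \<le> 1"
  unfolding Gm_def by simp

lemma measure_Fm_pos:
  assumes "0 < measure Fp S + measure Fm S" and "S \<in> sets borel"
  shows "0 < measure Fm S"
proof (rule ccontr)
  assume "\<not> 0 < measure Fm S"
  hence "measure Fm S = 0" using measure_nonneg[of Fm S] by linarith
  hence "S \<in> null_sets Fm"
    using assms(2) sets_Fm by (simp add: Fm.emeasure_eq_measure null_sets_def)
  hence "S \<in> null_sets Fp" using ac_Fm_Fp by (auto simp: absolutely_continuous_def)
  hence "measure Fp S = 0" by (simp add: measure_def null_setsD1)
  thus False using assms \<open>S \<in> null_sets Fm\<close> by (simp add: measure_def null_setsD1)
qed

lemma Gm_less_1: "Gm Fp Fm u < 1"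
  using measure_Fm_pos[of "{s. u < L s}"] unbounded measure_Fm_priv_llr_greater by auto

lemma measure_Fm_priv_llr_less_pos: "0 < measure Fm {s. L s < u}"
  using measure_Fm_pos[of "{s. L s < u}"] unbounded[rule_format, of "- u"] by simp

lemma exp_mult_tail_Gm_le_tail_Gp: "exp u * (1 - Gm Fp Fm u) \<le> 1 - Gp Fp Fm u"
  using exp_mult_measure_Fm_le_Fp[of u]
  by (simp add: measure_Fp_priv_llr_greater measure_Fm_priv_llr_greater)

lemma Gp_le_Gm: "Gp Fp Fm u \<le> Gm Fp Fm u"
proof (cases "u \<le> 0")
  case True
  have "Gp Fp Fm u \<le> exp u * Gm Fp Fm u" by (rule Gp_le_exp_mult_Gm)
  also have "\<dots> \<le> Gm Fp Fm u"
    using True by (simp add: Gm_def mult_left_le_one_le)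
  finally show ?thesis .
next
  case False
  hence "1 - Gm Fp Fm u \<le> exp u * (1 - Gm Fp Fm u)" using Gm_less_1[of u] by simp
  thus ?thesis using exp_mult_tail_Gm_le_tail_Gp[of u] by linarith
qed

lemma up_update_eq:
  "up_update Fp Fm x = x + ln (1 - Gp Fp Fm (- x)) - ln (1 - Gm Fp Fm (- x))"
proof -
  have "0 < 1 - Gm Fp Fm (- x)" "0 < 1 - Gp Fp Fm (- x)"
    using Gm_less_1[of "- x"] Gp_le_Gm[of "- x"] by linarith+
  thus ?thesis unfolding up_update_def Dp_def by (simp add: ln_div)
qed

lemma up_update_nonneg: "0 \<le> up_update Fp Fm x"
proof -
  have q: "0 < 1 - Gm Fp Fm (- x)" using Gm_less_1[of "- x"] by simp
  have "ln (exp (- x) * (1 - Gm Fp Fm (- x))) \<le> ln (1 - Gp Fp Fm (- x))"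
    using exp_mult_tail_Gm_le_tail_Gp[of "- x"] q by (intro ln_mono) auto
  thus ?thesis using q by (simp add: up_update_eq ln_mult)
qed

lemma le_up_update: "x \<le> up_update Fp Fm x"
proof -
  have "ln (1 - Gm Fp Fm (- x)) \<le> ln (1 - Gp Fp Fm (- x))"
    using Gp_le_Gm[of "- x"] Gm_less_1[of "- x"] by (intro ln_mono) auto
  thus ?thesis by (simp add: up_update_eq)
qed

lemma up_update_uniform_gain:
  assumes "0 < m"
  shows "\<exists>d>0. \<forall>x. 0 \<le> x \<and> x \<le> m \<longrightarrow> x + d \<le> up_update Fp Fm x"
proof -
  define e where "e = (1 - exp (- m)) * measure Fm {s. L s < - m}"
  have "0 < e" unfolding e_def using measure_Fm_priv_llr_less_pos[of "- m"] assms by simp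
  have "x + ln (1 + e) \<le> up_update Fp Fm x" if "0 \<le> x" "x \<le> m" for x
  proof -
    let ?Q = "1 - Gm Fp Fm (- x)" and ?P = "1 - Gp Fp Fm (- x)"
    have "0 < ?Q" "?Q \<le> 1" using Gm_less_1[of "- x"] by (simp_all add: Gm_def)
    have "?Q + e \<le> ?P" using Gp_add_gap_le_Gm[OF assms, of "- x"] that by (simp add: e_def)
    moreover have "?Q * (1 + e) \<le> ?Q + e" using \<open>?Q \<le> 1\<close> \<open>0 < e\<close> by (simp add: algebra_simps)
    ultimately have "ln (?Q * (1 + e)) \<le> ln ?P"
      using \<open>0 < ?Q\<close> \<open>0 < e\<close> by (intro ln_mono) auto
    thus ?thesis using \<open>0 < ?Q\<close> \<open>0 < e\<close> by (simp add: up_update_eq ln_mult)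
  qed
  thus ?thesis using \<open>0 < e\<close> by (intro exI[of _ "ln (1 + e)"]) auto
qed

text \<open>On a convex stretch of \<open>Gm\<close>, the increment over \<open>[c, d]\<close> is at most \<open>d - c\<close> times the increment
  over \<open>[d, d + 1]\<close>, which is at most the tail \<open>1 - Gm d\<close>; hence \<open>1 - Gm c \<le> (1 - Gm d) exp (d - c)\<close>.\<close>
lemma ln_tail_Gm_diff_le:
  assumes G: "convex_on {..<x0} (Gm Fp Fm)" and "c \<le> d" "d + 1 < x0"
  shows "ln (1 - Gm Fp Fm c) - ln (1 - Gm Fp Fm d) \<le> d - c"
proof -
  let ?G = "Gm Fp Fm"
  have "0 < 1 - ?G c" "0 < 1 - ?G d" using Gm_less_1 by (simp_all add: less_diff_eq)
  have "?G d - ?G c \<le> (d - c) * (?G (d + 1) - ?G d)"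
    using convex_on_increment_le[OF G, of c "d + 1" d] assms by simp
  also have "\<dots> \<le> (d - c) * (1 - ?G d)"
    using Gm_le_1[of "d + 1"] \<open>c \<le> d\<close> by (intro mult_left_mono) auto
  finally have "1 - ?G c \<le> (1 - ?G d) * (1 + (d - c))" by (simp add: algebra_simps)
  also have "\<dots> \<le> (1 - ?G d) * exp (d - c)"
    using \<open>0 < 1 - ?G d\<close> by (intro mult_left_mono) (auto simp: exp_ge_add_one_self add.commute)
  finally have "ln (1 - ?G c) \<le> ln ((1 - ?G d) * exp (d - c))"
    using \<open>0 < 1 - ?G c\<close> by (intro ln_mono) auto
  thus ?thesis using \<open>0 < 1 - ?G d\<close> by (simp add: ln_mult)
qed

lemma up_update_mono:
  assumes "convex_on {..<x0} (Gm Fp Fm)" and "2 - x0 \<le> x" "x \<le> y"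
  shows "up_update Fp Fm x \<le> up_update Fp Fm y"
proof -
  have "0 < 1 - Gp Fp Fm (- x)" using Gm_less_1[of "- x"] Gp_le_Gm[of "- x"] by linarith
  moreover have "1 - Gp Fp Fm (- x) \<le> 1 - Gp Fp Fm (- y)" using Gp_mono[of "- y" "- x"] assms by simp
  ultimately have "ln (1 - Gp Fp Fm (- x)) \<le> ln (1 - Gp Fp Fm (- y))" by (intro ln_mono) auto
  moreover have "ln (1 - Gm Fp Fm (- y)) - ln (1 - Gm Fp Fm (- x)) \<le> y - x"
    using ln_tail_Gm_diff_le[OF assms(1), of "- y" "- x"] assms by simp
  ultimately show ?thesis by (simp add: up_update_eq)
qed

end

theorem lemma8:
  fixes Fp Fm :: "real measure"
  assumes "social_learning_model Fp Fm"
    and "left_tail_convex_diff (Gm Fp Fm)"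
  shows "\<exists>z::nat. z > 0 \<and>
    (\<forall>(a::nat \<Rightarrow> bool) t s. t \<ge> 1 \<longrightarrow> s \<ge> 1 \<longrightarrow>
       (\<forall>i. t \<le> i \<and> i \<le> t + s - 1 \<longrightarrow> a i) \<longrightarrow>
       pub_llr Fp Fm a (t + s) \<ge> lstar Fp Fm (int s - int z))"
proof -
  interpret social_learning Fp Fm using assms(1) by (rule social_learning_modelD)
  obtain x0 where convex: "convex_on {..<x0} (Gm Fp Fm)"
    using assms(2) unfolding left_tail_convex_diff_def by blast
  obtain z where "0 < z" and lag: "\<And>y j. (up_update Fp Fm ^^ j) 0 \<le> (up_update Fp Fm ^^ (z + j)) y"
    using funpow_overtakes_orbit_of_zero[OF up_update_nonneg le_up_update up_update_uniform_gain
        up_update_mono[OF convex]] by blast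
  have "lstar Fp Fm (int s - int z) \<le> pub_llr Fp Fm a (t + s)"
    if "1 \<le> t" "1 \<le> s" "\<forall>i. t \<le> i \<and> i \<le> t + s - 1 \<longrightarrow> a i" for a t s
  proof -
    have "\<forall>i. t \<le> i \<and> i < t + s \<longrightarrow> a i" using that by auto
    hence "pub_llr Fp Fm a (t + s) = (up_update Fp Fm ^^ s) (pub_llr Fp Fm a t)"
      by (rule pub_llr_up_run[OF \<open>1 \<le> t\<close>])
    thus ?thesis
      using funpow_delayed_orbit_of_zero_le[OF up_update_nonneg le_up_update lag \<open>1 \<le> s\<close>]
      by (simp add: lstar_eq_funpow_up_update)
  qed
  with \<open>0 < z\<close> show ?thesis by blast
qed

end
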